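(* Let $S$ be a semigroup and $a_1,a_2,\dotsc$ a sequence in $S$. Then $a_1,a_2,\dotsc$ has a proper sumsequence if and only if it has a sumsequence $b_1,b_2,\dotsc$ with $\bigcap_{n=1}^{\infty}\mathrm{FS}(b_n,b_{n+1},\dotsc)=\emptyset$.
   Context: Semigroups are written additively and are not assumed commutative. For a sequence $a_1,a_2,\dotsc$ and a finite nonempty index set $F=\{i_1<\dotsb<i_m\}\subseteq\mathbb N$, let $a_F:=a_{i_1}+\dotsb+a_{i_m}$. For finite index sets $F_1,F_2$, write $F_1<F_2$ if every element of $F_1$ is smaller than every element of $F_2$. A sumsequence of $a_1,a_2,\dotsc$ is a sequence $a_{F_1},a_{F_2},\dotsc$ for some sequence $F_1<F_2<\dotsb$ of nonempty finite index sets. A sequence is proper if $a_{F_1}\ne a_{F_2}$ for all nonempty finite index sets $F_1<F_2$. $\mathrm{FS}(b_n,b_{n+1},\dotsc)$ denotes the set of all sums $b_{i_1}+\dotsb+b_{i_m}$ with $m\ge1$ and $n\le i_1<\dotsb<i_m$. *)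

theory Defs
  imports Main
begin

fun listsum1 :: "'a::semigroup_add list \<Rightarrow> 'a" where
  "listsum1 [] = undefined"
| "listsum1 [x] = x"
| "listsum1 (x # y # zs) = x + listsum1 (y # zs)"

definition idxsum :: "(nat \<Rightarrow> 'a::semigroup_add) \<Rightarrow> nat set \<Rightarrow> 'a" where
  "idxsum a F = listsum1 (map a (sorted_list_of_set F))"

definition set_less :: "nat set \<Rightarrow> nat set \<Rightarrow> bool" where
  "set_less F1 F2 \<longleftrightarrow> (\<forall>x\<in>F1. \<forall>y\<in>F2. x < y)"

definition is_sumsequence :: "(nat \<Rightarrow> 'a::semigroup_add) \<Rightarrow> (nat \<Rightarrow> 'a) \<Rightarrow> bool" where
  "is_sumsequence a b \<longleftrightarrow>
     (\<exists>F :: nat \<Rightarrow> nat set.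
        (\<forall>n. finite (F n) \<and> F n \<noteq> {}) \<and>
        (\<forall>m n. m < n \<longrightarrow> set_less (F m) (F n)) \<and>
        (\<forall>n. b n = idxsum a (F n)))"

definition proper_seq :: "(nat \<Rightarrow> 'a::semigroup_add) \<Rightarrow> bool" where
  "proper_seq a \<longleftrightarrow>
     (\<forall>F1 F2. finite F1 \<and> F1 \<noteq> {} \<and> finite F2 \<and> F2 \<noteq> {} \<and> set_less F1 F2
        \<longrightarrow> idxsum a F1 \<noteq> idxsum a F2)"

definition FS :: "(nat \<Rightarrow> 'a::semigroup_add) \<Rightarrow> nat \<Rightarrow> 'a set" where
  "FS b n = {idxsum b G | G. finite G \<and> G \<noteq> {} \<and> G \<subseteq> {n..}}"

end

theory Submission
  imports Defs
begin

text \<open>If no element lies in every FS b m, then any finite set of values avoids FS b m for all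
  large m, as the tails FS b m decrease. Choosing indices n 0 < n 1 < ... so that all sums of
  b 0, ..., b (n k) avoid FS b (n (k+1)) yields a subsequence b \<circ> n, itself a sumsequence of a,
  in which a block sum never equals a later block sum: the later sum is in FS b (n (k+1)) for
  k = max of the earlier block. Conversely, for a proper sequence a common element of all
  FS b m would give two equal sums over sets F1 < F2.\<close>

lemma sorted_list_of_set_image_strict_mono:
  fixes n :: "nat \<Rightarrow> nat"
  assumes "strict_mono n" "finite F"
  shows "sorted_list_of_set (n ` F) = map n (sorted_list_of_set F)"
proof -
  have "inj n" using assms(1) strict_mono_imp_inj_on by blast
  then have "length (map n (sorted_list_of_set F)) = card (n ` F)"
    using assms(2) by (simp add: card_image inj_on_subset)
  moreover have "sorted_wrt (<) (map n (sorted_list_of_set F))"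
    unfolding sorted_wrt_map
    by (rule sorted_wrt_mono_rel[OF _ sorted_list_of_set.strict_sorted_key_list_of_set])
       (use assms(1) in \<open>auto simp: strict_mono_def\<close>)
  moreover have "set (map n (sorted_list_of_set F)) = n ` F" using assms(2) by simp
  ultimately show ?thesis
    using sorted_list_of_set_unique[of "n ` F"] assms(2) by blast
qed

lemma idxsum_comp_strict_mono:
  assumes "strict_mono n" "finite F"
  shows "idxsum (b \<circ> n) F = idxsum b (n ` F)"
  unfolding idxsum_def using sorted_list_of_set_image_strict_mono[OF assms] by simp

lemma is_sumsequence_comp_strict_mono:
  assumes "is_sumsequence a b" "strict_mono n"
  shows "is_sumsequence a (b \<circ> n)"
proof -
  obtain F where "\<forall>k. finite (F k) \<and> F k \<noteq> {}"
    and "\<forall>i j. i < j \<longrightarrow> set_less (F i) (F j)"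
    and "\<forall>k. b k = idxsum a (F k)"
    using assms(1) unfolding is_sumsequence_def by blast
  then show ?thesis
    unfolding is_sumsequence_def using assms(2)
    by (intro exI[of _ "F \<circ> n"]) (simp add: strict_mono_less)
qed

lemma FS_antimono:
  assumes "m \<le> m'"
  shows "FS b m' \<subseteq> FS b m"
  unfolding FS_def using assms by fastforce

lemma Inter_FS_empty_if_proper_seq:
  assumes "proper_seq b"
  shows "(\<Inter>m. FS b m) = {}"
proof (rule ccontr)
  assume "(\<Inter>m. FS b m) \<noteq> {}"
  then obtain x where x: "\<And>m. x \<in> FS b m" by blast
  from x[of 0] obtain G1 where G1: "x = idxsum b G1" "finite G1" "G1 \<noteq> {}"
    unfolding FS_def by blast
  from x[of "Suc (Max G1)"] obtain G2 where G2: "x = idxsum b G2" "finite G2" "G2 \<noteq> {}"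
    and tail: "G2 \<subseteq> {Suc (Max G1)..}"
    unfolding FS_def by blast
  have "set_less G1 G2"
    unfolding set_less_def
  proof (intro ballI)
    fix u v assume "u \<in> G1" "v \<in> G2"
    then have "u \<le> Max G1" "Suc (Max G1) \<le> v" using G1 tail by auto
    then show "u < v" by simp
  qed
  then show False using assms G1 G2 unfolding proper_seq_def by metis
qed

lemma eventually_disjoint_FS:
  assumes "finite V" "(\<Inter>m. FS b m) = {}"
  shows "\<forall>\<^sub>F m in sequentially. V \<inter> FS b m = {}"
proof -
  have "\<forall>\<^sub>F m in sequentially. x \<notin> FS b m" for x
  proof -
    obtain m0 where "x \<notin> FS b m0" using assms(2) by blast
    then show ?thesis
      unfolding eventually_sequentially using FS_antimono by blast
  qed
  then have "\<forall>\<^sub>F m in sequentially. \<forall>x\<in>V. x \<notin> FS b m"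
    using assms(1) by (simp add: eventually_ball_finite)
  then show ?thesis by (rule eventually_mono) blast
qed

definition initial_sums :: "(nat \<Rightarrow> 'a::semigroup_add) \<Rightarrow> nat \<Rightarrow> 'a set" where
  "initial_sums b k = {idxsum b H | H. H \<noteq> {} \<and> H \<subseteq> {..k}}"

lemma finite_initial_sums: "finite (initial_sums b k)"
proof (rule finite_subset)
  show "initial_sums b k \<subseteq> idxsum b ` Pow {..k}" unfolding initial_sums_def by auto
qed simp

lemma proper_seq_comp_if_separating:
  assumes mono: "strict_mono n"
    and separating: "\<And>k. initial_sums b (n k) \<inter> FS b (n (Suc k)) = {}"
  shows "proper_seq (b \<circ> n)"
  unfolding proper_seq_def
proof (intro allI impI notI)
  fix G1 G2
  assume G: "finite G1 \<and> G1 \<noteq> {} \<and> finite G2 \<and> G2 \<noteq> {} \<and> set_less G1 G2"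
    and eq: "idxsum (b \<circ> n) G1 = idxsum (b \<circ> n) G2"
  define k where "k = Max G1"
  have "k \<in> G1" using G Max_in k_def by blast
  have "n ` G1 \<subseteq> {..n k}"
    using G mono unfolding k_def by (auto simp: strict_mono_less_eq)
  then have in_initial: "idxsum b (n ` G1) \<in> initial_sums b (n k)"
    unfolding initial_sums_def using G by (intro CollectI exI[of _ "n ` G1"]) simp
  have "Suc k \<le> v" if "v \<in> G2" for v
    using G \<open>k \<in> G1\<close> that unfolding set_less_def by (simp add: Suc_le_eq)
  then have "n ` G2 \<subseteq> {n (Suc k)..}"
    using mono by (auto simp: strict_mono_less_eq)
  then have in_tail: "idxsum b (n ` G2) \<in> FS b (n (Suc k))"
    unfolding FS_def using G by (intro CollectI exI[of _ "n ` G2"]) simp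
  have "idxsum b (n ` G1) = idxsum b (n ` G2)"
    using G eq by (simp add: idxsum_comp_strict_mono[OF mono])
  with in_initial in_tail have "idxsum b (n ` G2) \<in> initial_sums b (n k) \<inter> FS b (n (Suc k))"
    by simp
  then show False by (simp add: separating)
qed

lemma proper_subsequence_if_Inter_FS_empty:
  assumes "(\<Inter>m. FS b m) = {}"
  obtains n where "strict_mono n" "proper_seq (b \<circ> n)"
proof -
  have "\<exists>m'. m < m' \<and> initial_sums b m \<inter> FS b m' = {}" for m
  proof -
    have "\<forall>\<^sub>F m' in sequentially. m < m' \<and> initial_sums b m \<inter> FS b m' = {}"
      using eventually_gt_at_top eventually_disjoint_FS[OF finite_initial_sums assms]
      by (rule eventually_conj)
    then show ?thesis unfolding eventually_sequentially by blast
  qed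
  then obtain n where n: "\<forall>k. n k < n (Suc k) \<and> initial_sums b (n k) \<inter> FS b (n (Suc k)) = {}"
    using dependent_nat_choice[where P = "\<lambda>_ _. True"
        and Q = "\<lambda>_ m m'. m < m' \<and> initial_sums b m \<inter> FS b m' = {}"] by auto
  then have "strict_mono n" by (simp add: strict_mono_Suc_iff)
  with n show ?thesis
    using that proper_seq_comp_if_separating by blast
qed

theorem proposition2p3:
  fixes a :: "nat \<Rightarrow> 'a::semigroup_add"
  shows "(\<exists>b. is_sumsequence a b \<and> proper_seq b) \<longleftrightarrow>
         (\<exists>b. is_sumsequence a b \<and> (\<Inter>n. FS b n) = {})"
proof
  assume "\<exists>b. is_sumsequence a b \<and> proper_seq b"
  then show "\<exists>b. is_sumsequence a b \<and> (\<Inter>n. FS b n) = {}"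
    using Inter_FS_empty_if_proper_seq by blast
next
  assume "\<exists>b. is_sumsequence a b \<and> (\<Inter>n. FS b n) = {}"
  then obtain b where "is_sumsequence a b" "(\<Inter>n. FS b n) = {}" by blast
  moreover obtain n where "strict_mono n" "proper_seq (b \<circ> n)"
    using proper_subsequence_if_Inter_FS_empty[OF \<open>(\<Inter>n. FS b n) = {}\<close>] .
  ultimately show "\<exists>b. is_sumsequence a b \<and> proper_seq b"
    using is_sumsequence_comp_strict_mono by blast
qed

end
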